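(* There exists a positive integer $d_0$ such that the following holds for all integers $d \geq d_0$. Let $n \geq d+1$ be an even integer, and let $G$ be a $d$-regular graph on $[n]$. Then there exists a balanced bipartition $\{X,Y\}$ of $[n]$ (i.e. $|X|=|Y|=n/2$) such that for each graph $H \in \{G[X,Y], G[X], G[Y]\}$, we have $\frac{d}{2}-d^{2/3}\leq \deg_H(v) \leq \frac{d}{2} + d^{2/3}$ for every $v \in V(H)$.
   Context: Graphs are simple and finite. For $U\subseteq V(G)$, $G[U]$ is the induced subgraph on $U$; for disjoint $X,Y\subseteq V(G)$, $G[X,Y]$ is the bipartite subgraph with vertex set $X\cup Y$ consisting of all edges of $G$ with one endpoint in $X$ and the other in $Y$. *)

theory Defs
  imports Complex_Main
begin

definition simple_graph_on :: "nat set \<Rightarrow> (nat \<Rightarrow> nat \<Rightarrow> bool) \<Rightarrow> bool" where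
  "simple_graph_on V E \<longleftrightarrow> (\<forall>u v. E u v \<longrightarrow> u \<in> V \<and> v \<in> V) \<and>
     (\<forall>u v. E u v \<longrightarrow> E v u) \<and> (\<forall>v. \<not> E v v)"

definition nbhd :: "(nat \<Rightarrow> nat \<Rightarrow> bool) \<Rightarrow> nat \<Rightarrow> nat set" where
  "nbhd E v = {u. E v u}"

definition regular_graph_on :: "nat set \<Rightarrow> (nat \<Rightarrow> nat \<Rightarrow> bool) \<Rightarrow> nat \<Rightarrow> bool" where
  "regular_graph_on V E d \<longleftrightarrow> simple_graph_on V E \<and> (\<forall>v\<in>V. card (nbhd E v) = d)"

definition induced :: "(nat \<Rightarrow> nat \<Rightarrow> bool) \<Rightarrow> nat set \<Rightarrow> nat \<Rightarrow> nat \<Rightarrow> bool" where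
  "induced E U u v \<longleftrightarrow> E u v \<and> u \<in> U \<and> v \<in> U"

definition bipartite_sub :: "(nat \<Rightarrow> nat \<Rightarrow> bool) \<Rightarrow> nat set \<Rightarrow> nat set \<Rightarrow> nat \<Rightarrow> nat \<Rightarrow> bool" where
  "bipartite_sub E X Y u v \<longleftrightarrow> E u v \<and> ((u \<in> X \<and> v \<in> Y) \<or> (u \<in> Y \<and> v \<in> X))"

definition degree :: "(nat \<Rightarrow> nat \<Rightarrow> bool) \<Rightarrow> nat \<Rightarrow> nat" where
  "degree E v = card (nbhd E v)"

end

theory Submission
  imports Defs "HOL-Probability.Hoeffding"
begin

text \<open>
  Pair the vertices as \<open>{2i - 1, 2i}\<close> and put one vertex of every pair into \<open>X\<close>, independently
  and uniformly at random; then \<open>|X| = n/2\<close> automatically. For a vertex \<open>v\<close>, the quantity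
  \<open>2 |N(v) \<inter> X| - d\<close> is a sum of independent symmetric terms, one per pair meeting \<open>N(v)\<close>,
  whose squares add up to at most \<open>2d\<close>; a Chernoff bound therefore makes a deviation beyond
  \<open>2 d^(2/3)\<close> have probability at most \<open>2 exp (- d^(1/3))\<close>. This bad event depends only on the pairs
  meeting \<open>N(v)\<close>, hence on at most \<open>2 d\<^sup>2\<close> bad events, and the symmetric local lemma
  yields a choice of \<open>X\<close> avoiding all of them. The bounds for \<open>G[Y]\<close> and \<open>G[X, Y]\<close> follow from
  \<open>|N(v) \<inter> Y| = d - |N(v) \<inter> X|\<close>. All probabilities are expressed by counting subsets of the set
  of pairs.
\<close>

hide_const (open) Polynomial.degree

lemma exp_plus_exp_minus_le: "exp y + exp (- y) \<le> 2 * exp (y\<^sup>2 / 2)" for y :: real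
proof -
  have nonneg: "exp y + exp (- y) \<le> 2 * exp (y\<^sup>2 / 2)" if "y \<ge> 0" for y :: real
  proof -
    have pos: "exp y + exp (- y) > 0" by (simp add: add_pos_pos)
    have eq: "1 + (1/2) * (exp (2*y) - 1) = exp y * ((exp y + exp (- y)) / 2)"
      by (simp add: field_simps exp_minus flip: exp_add)
    have "ln (1 + (1/2) * (exp (2*y) - 1)) = y + ln ((exp y + exp (- y)) / 2)"
      unfolding eq using pos by (subst ln_mult) auto
    moreover have "- (2*y) * (1/2) + ln (1 + (1/2) * (exp (2*y) - 1)) \<le> (2*y)\<^sup>2 / 8"
      using Hoeffdings_lemma_aux[of "2*y" "1/2"] that by simp
    ultimately have "ln ((exp y + exp (- y)) / 2) \<le> y\<^sup>2 / 2"
      by (simp add: power2_eq_square)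
    hence "(exp y + exp (- y)) / 2 \<le> exp (y\<^sup>2 / 2)"
      using pos by (metis exp_le_cancel_iff exp_ln half_gt_zero)
    thus ?thesis by simp
  qed
  show ?thesis
    using nonneg[of y] nonneg[of "- y"] by (cases "y \<ge> 0") (simp_all add: add.commute)
qed

lemma sum_Pow_exp_signed_sum_le:
  fixes h :: "'a \<Rightarrow> bool \<Rightarrow> real"
  assumes fin: "finite I" and anti: "\<And>i. h i False = - h i True"
  shows "(\<Sum>\<sigma>\<in>Pow I. exp (\<mu> * (\<Sum>i\<in>I. h i (i \<in> \<sigma>))))
           \<le> 2 ^ card I * exp (\<mu>\<^sup>2 * (\<Sum>i\<in>I. (h i True)\<^sup>2) / 2)"
proof -
  define g where "g i b = exp (\<mu> * h i b)" for i b
  have split: "(\<Prod>i\<in>I. g i (i \<in> \<sigma>)) = (\<Prod>i\<in>\<sigma>. g i True) * (\<Prod>i\<in>I - \<sigma>. g i False)"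
    if "\<sigma> \<subseteq> I" for \<sigma>
  proof -
    have "(\<Prod>i\<in>I. g i (i \<in> \<sigma>)) = (\<Prod>i\<in>\<sigma>. g i (i \<in> \<sigma>)) * (\<Prod>i\<in>I - \<sigma>. g i (i \<in> \<sigma>))"
      using fin that by (metis prod.subset_diff mult.commute)
    also have "\<dots> = (\<Prod>i\<in>\<sigma>. g i True) * (\<Prod>i\<in>I - \<sigma>. g i False)"
      by (intro arg_cong2[where f = "(*)"] prod.cong) auto
    finally show ?thesis .
  qed
  have "(\<Sum>\<sigma>\<in>Pow I. exp (\<mu> * (\<Sum>i\<in>I. h i (i \<in> \<sigma>)))) = (\<Sum>\<sigma>\<in>Pow I. \<Prod>i\<in>I. g i (i \<in> \<sigma>))"
    unfolding g_def by (simp add: sum_distrib_left exp_sum fin)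
  also have "\<dots> = (\<Sum>\<sigma>\<in>Pow I. (\<Prod>i\<in>\<sigma>. g i True) * (\<Prod>i\<in>I - \<sigma>. g i False))"
    by (rule sum.cong) (auto simp: split)
  also have "\<dots> = (\<Prod>i\<in>I. g i True + g i False)"
    by (rule prod_add[OF fin, symmetric])
  also have "\<dots> \<le> (\<Prod>i\<in>I. 2 * exp ((\<mu> * h i True)\<^sup>2 / 2))"
    using exp_plus_exp_minus_le by (intro prod_mono) (simp add: g_def anti add_nonneg_nonneg)
  also have "\<dots> = 2 ^ card I * exp (\<mu>\<^sup>2 * (\<Sum>i\<in>I. (h i True)\<^sup>2) / 2)"
    by (simp add: prod.distrib exp_sum fin sum_distrib_left sum_divide_distrib power_mult_distrib)
  finally show ?thesis .
qed

lemma card_Pow_signed_sum_ge_le: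
  fixes h :: "'a \<Rightarrow> bool \<Rightarrow> real"
  assumes fin: "finite I" and anti: "\<And>i. h i False = - h i True"
    and c: "(\<Sum>i\<in>I. (h i True)\<^sup>2) \<le> c" and l: "l > 0"
  shows "real (card {\<sigma>\<in>Pow I. t \<le> (\<Sum>i\<in>I. h i (i \<in> \<sigma>))})
           \<le> 2 ^ card I * exp (l\<^sup>2 * c / 2 - l * t)"
proof -
  define F where "F \<sigma> = (\<Sum>i\<in>I. h i (i \<in> \<sigma>))" for \<sigma>
  have "real (card {\<sigma>\<in>Pow I. t \<le> F \<sigma>}) * exp (l * t) = (\<Sum>\<sigma>\<in>{\<sigma>\<in>Pow I. t \<le> F \<sigma>}. exp (l * t))"
    by simp
  also have "\<dots> \<le> (\<Sum>\<sigma>\<in>{\<sigma>\<in>Pow I. t \<le> F \<sigma>}. exp (l * F \<sigma>))"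
    using l by (intro sum_mono) auto
  also have "\<dots> \<le> (\<Sum>\<sigma>\<in>Pow I. exp (l * F \<sigma>))"
    using fin by (intro sum_mono2) auto
  also have "\<dots> \<le> 2 ^ card I * exp (l\<^sup>2 * (\<Sum>i\<in>I. (h i True)\<^sup>2) / 2)"
    unfolding F_def by (rule sum_Pow_exp_signed_sum_le[OF fin anti])
  also have "\<dots> \<le> 2 ^ card I * exp (l\<^sup>2 * c / 2)"
    using c by (simp add: mult_left_mono divide_right_mono)
  finally have "real (card {\<sigma>\<in>Pow I. t \<le> F \<sigma>}) \<le> 2 ^ card I * exp (l\<^sup>2 * c / 2) / exp (l * t)"
    by (simp add: pos_le_divide_eq)
  thus ?thesis
    unfolding F_def by (simp add: exp_diff)
qed

lemma card_Pow_abs_signed_sum_gt_le: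
  fixes h :: "'a \<Rightarrow> bool \<Rightarrow> real"
  assumes fin: "finite I" and anti: "\<And>i. h i False = - h i True"
    and c: "(\<Sum>i\<in>I. (h i True)\<^sup>2) \<le> c" and l: "l > 0"
  shows "real (card {\<sigma>\<in>Pow I. t < \<bar>\<Sum>i\<in>I. h i (i \<in> \<sigma>)\<bar>})
           \<le> 2 * 2 ^ card I * exp (l\<^sup>2 * c / 2 - l * t)"
proof -
  define F where "F \<sigma> = (\<Sum>i\<in>I. h i (i \<in> \<sigma>))" for \<sigma>
  define bound where "bound = 2 ^ card I * exp (l\<^sup>2 * c / 2 - l * t)"
  have upper: "real (card {\<sigma>\<in>Pow I. t \<le> F \<sigma>}) \<le> bound"
    unfolding F_def bound_def by (rule card_Pow_signed_sum_ge_le[OF fin anti c l])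
  have "real (card {\<sigma>\<in>Pow I. t \<le> (\<Sum>i\<in>I. - h i (i \<in> \<sigma>))}) \<le> bound"
    unfolding bound_def using anti c by (intro card_Pow_signed_sum_ge_le[OF fin _ _ l]) auto
  hence lower: "real (card {\<sigma>\<in>Pow I. t \<le> - F \<sigma>}) \<le> bound"
    unfolding F_def by (simp add: sum_negf)
  have "{\<sigma>\<in>Pow I. t < \<bar>F \<sigma>\<bar>} \<subseteq> {\<sigma>\<in>Pow I. t \<le> F \<sigma>} \<union> {\<sigma>\<in>Pow I. t \<le> - F \<sigma>}"
    by auto
  hence "card {\<sigma>\<in>Pow I. t < \<bar>F \<sigma>\<bar>} \<le> card ({\<sigma>\<in>Pow I. t \<le> F \<sigma>} \<union> {\<sigma>\<in>Pow I. t \<le> - F \<sigma>})"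
    using fin by (intro card_mono) auto
  also have "\<dots> \<le> card {\<sigma>\<in>Pow I. t \<le> F \<sigma>} + card {\<sigma>\<in>Pow I. t \<le> - F \<sigma>}"
    by (rule card_Un_le)
  finally show ?thesis
    using upper lower unfolding F_def bound_def by linarith
qed

lemma card_Pow_by_split:
  assumes "finite I" and P: "P \<subseteq> Pow (I \<inter> S)" and Q: "Q \<subseteq> Pow (I - S)"
  shows "card {\<sigma>\<in>Pow I. \<sigma> \<inter> S \<in> P \<and> \<sigma> - S \<in> Q} = card P * card Q"
proof -
  define C where "C = {\<sigma>\<in>Pow I. \<sigma> \<inter> S \<in> P \<and> \<sigma> - S \<in> Q}"
  define split where "split \<sigma> = (\<sigma> \<inter> S, \<sigma> - S)" for \<sigma> :: "'a set"
  have "inj_on split C"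
    unfolding split_def inj_on_def by blast
  moreover have "split ` C = P \<times> Q"
  proof (intro equalityI subsetI)
    fix x assume "x \<in> split ` C"
    thus "x \<in> P \<times> Q"
      unfolding C_def split_def by auto
  next
    fix x assume "x \<in> P \<times> Q"
    then obtain a b where x: "x = (a, b)" "a \<in> P" "b \<in> Q"
      by blast
    hence "a \<subseteq> I \<inter> S" "b \<subseteq> I - S"
      using P Q by auto
    hence "(a \<union> b) \<inter> S = a" "a \<union> b - S = b" "a \<union> b \<subseteq> I"
      by auto
    hence "a \<union> b \<in> C" "split (a \<union> b) = x"
      using x unfolding C_def split_def by auto
    thus "x \<in> split ` C"
      by blast
  qed
  ultimately show ?thesis
    unfolding C_def[symmetric] by (metis card_image card_cartesian_product)
qed

text \<open>Two families of subsets of \<open>I\<close>, the first determined by the coordinates in \<open>S\<close> and the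
  second by those outside \<open>S\<close>, are independent for the uniform measure on \<open>Pow I\<close>.\<close>
lemma card_Int_Pow_independent:
  assumes fin: "finite I" and AI: "A \<subseteq> Pow I" and BI: "B \<subseteq> Pow I"
    and A: "\<And>\<sigma>. \<sigma> \<subseteq> I \<Longrightarrow> \<sigma> \<in> A \<longleftrightarrow> \<sigma> \<inter> S \<in> A"
    and B: "\<And>\<sigma>. \<sigma> \<subseteq> I \<Longrightarrow> \<sigma> \<in> B \<longleftrightarrow> \<sigma> - S \<in> B"
  shows "card (A \<inter> B) * card (Pow I) = card A * card B"
proof -
  define A' where "A' = A \<inter> Pow (I \<inter> S)"
  define B' where "B' = B \<inter> Pow (I - S)"
  have P: "A' \<subseteq> Pow (I \<inter> S)" "Pow (I \<inter> S) \<subseteq> Pow (I \<inter> S)"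
   and Q: "B' \<subseteq> Pow (I - S)" "Pow (I - S) \<subseteq> Pow (I - S)"
    unfolding A'_def B'_def by auto
  have memA: "\<sigma> \<in> A \<longleftrightarrow> \<sigma> \<inter> S \<in> A'" and memB: "\<sigma> \<in> B \<longleftrightarrow> \<sigma> - S \<in> B'" if "\<sigma> \<subseteq> I" for \<sigma>
    using A[OF that] B[OF that] that unfolding A'_def B'_def by auto
  have "card (A \<inter> B) = card A' * card B'"
  proof -
    have "A \<inter> B = {\<sigma>\<in>Pow I. \<sigma> \<inter> S \<in> A' \<and> \<sigma> - S \<in> B'}"
      using memA memB AI BI by auto
    thus ?thesis
      using card_Pow_by_split[OF fin P(1) Q(1)] by simp
  qed
  moreover have "card A = card A' * card (Pow (I - S))"
  proof -
    have "A = {\<sigma>\<in>Pow I. \<sigma> \<inter> S \<in> A' \<and> \<sigma> - S \<in> Pow (I - S)}"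
      using memA AI by auto
    thus ?thesis
      using card_Pow_by_split[OF fin P(1) Q(2)] by simp
  qed
  moreover have "card B = card (Pow (I \<inter> S)) * card B'"
  proof -
    have "B = {\<sigma>\<in>Pow I. \<sigma> \<inter> S \<in> Pow (I \<inter> S) \<and> \<sigma> - S \<in> B'}"
      using memB BI by auto
    thus ?thesis
      using card_Pow_by_split[OF fin P(2) Q(1)] by simp
  qed
  moreover have "card (Pow I) = card (Pow (I \<inter> S)) * card (Pow (I - S))"
  proof -
    have "Pow I = {\<sigma>\<in>Pow I. \<sigma> \<inter> S \<in> Pow (I \<inter> S) \<and> \<sigma> - S \<in> Pow (I - S)}"
      by blast
    thus ?thesis
      by (subst (1) \<open>Pow I = _\<close>) (rule card_Pow_by_split[OF fin P(2) Q(2)])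
  qed
  ultimately show ?thesis
    by (simp only: ac_simps)
qed

text \<open>The symmetric Lovasz local lemma for the uniform measure on \<open>Pow I\<close>, stated by counting:
  the bad event \<open>A v\<close> depends only on the coordinates in \<open>S v\<close>.\<close>
locale local_lemma =
  fixes I :: "'i set" and V :: "'v set" and A :: "'v \<Rightarrow> 'i set set" and S :: "'v \<Rightarrow> 'i set"
    and p :: real and D :: nat
  assumes finite_I: "finite I" and finite_V: "finite V"
    and A_subset: "\<And>v. v \<in> V \<Longrightarrow> A v \<subseteq> Pow I"
    and A_determined: "\<And>v \<sigma>. v \<in> V \<Longrightarrow> \<sigma> \<subseteq> I \<Longrightarrow> \<sigma> \<in> A v \<longleftrightarrow> \<sigma> \<inter> S v \<in> A v"
    and card_A: "\<And>v. v \<in> V \<Longrightarrow> real (card (A v)) \<le> p * card (Pow I)"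
    and card_dependent: "\<And>v. v \<in> V \<Longrightarrow> card {w\<in>V. S w \<inter> S v \<noteq> {}} \<le> D"
    and p_D: "4 * p * D \<le> 1" and p_nonneg: "0 \<le> p" and p_less: "p < 1/2"
begin

definition avoiding :: "'v set \<Rightarrow> 'i set set" where
  "avoiding T = Pow I - \<Union>(A ` T)"

lemma finite_avoiding: "finite (avoiding T)"
  using finite_I unfolding avoiding_def by simp

lemma card_A_Int_avoiding_independent:
  assumes v: "v \<in> V" and T: "T \<subseteq> V" and disj: "\<And>w. w \<in> T \<Longrightarrow> S w \<inter> S v = {}"
  shows "real (card (A v \<inter> avoiding T)) \<le> p * card (avoiding T)"
proof -
  have avoiding_determined: "\<sigma> \<in> avoiding T \<longleftrightarrow> \<sigma> - S v \<in> avoiding T" if "\<sigma> \<subseteq> I" for \<sigma>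
  proof -
    have "\<sigma> \<in> A w \<longleftrightarrow> \<sigma> - S v \<in> A w" if "w \<in> T" for w
    proof -
      have "(\<sigma> - S v) \<inter> S w = \<sigma> \<inter> S w"
        using disj[OF that] by auto
      thus ?thesis
        using A_determined[of w \<sigma>] A_determined[of w "\<sigma> - S v"] \<open>\<sigma> \<subseteq> I\<close> T that by auto
    qed
    thus ?thesis
      using that unfolding avoiding_def by auto
  qed
  have "card (A v \<inter> avoiding T) * card (Pow I) = card (A v) * card (avoiding T)"
    by (rule card_Int_Pow_independent[OF finite_I A_subset[OF v] _ A_determined[OF v]
          avoiding_determined]) (auto simp: avoiding_def)
  hence "real (card (A v \<inter> avoiding T)) * card (Pow I) = card (A v) * card (avoiding T)"
    by (metis of_nat_mult)
  also have "\<dots> \<le> p * card (Pow I) * card (avoiding T)"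
    using card_A[OF v] by (simp add: mult_right_mono)
  finally have "real (card (Pow I)) * card (A v \<inter> avoiding T)
      \<le> real (card (Pow I)) * (p * card (avoiding T))"
    by (simp add: ac_simps)
  moreover have "real (card (Pow I)) > 0"
    using finite_I by (simp add: card_Pow)
  ultimately show ?thesis
    by simp
qed

lemma card_avoiding_pos_step:
  assumes "w \<in> V" and pos: "card (avoiding T) > 0"
    and bound: "real (card (A w \<inter> avoiding T)) \<le> 2 * p * card (avoiding T)"
  shows "card (avoiding (insert w T)) > 0"
proof -
  have "2 * p * card (avoiding T) < 1 * real (card (avoiding T))"
    using p_less pos by (intro mult_strict_right_mono) auto
  hence "card (A w \<inter> avoiding T) < card (avoiding T)"
    using bound by linarith
  moreover have "avoiding (insert w T) = avoiding T - (A w \<inter> avoiding T)"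
    unfolding avoiding_def by auto
  ultimately show ?thesis
    using finite_avoiding by (simp add: card_Diff_subset)
qed

definition dependent :: "'v \<Rightarrow> 'v set" where
  "dependent v = {w\<in>V. S w \<inter> S v \<noteq> {}}"

lemma card_avoiding_Diff_dependent_le:
  assumes v: "v \<in> V" and T: "T \<subseteq> V"
    and IH: "\<And>w. w \<in> T \<inter> dependent v \<Longrightarrow>
      real (card (A w \<inter> avoiding (T - dependent v))) \<le> 2 * p * card (avoiding (T - dependent v))"
  shows "real (card (avoiding (T - dependent v))) \<le> 2 * card (avoiding T)"
proof -
  define T' where "T' = T - dependent v"
  have fin: "finite (T \<inter> dependent v)"
    using T finite_V finite_subset by blast
  have "avoiding T' \<subseteq> avoiding T \<union> (\<Union>w\<in>T \<inter> dependent v. A w \<inter> avoiding T')"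
    unfolding avoiding_def T'_def by auto
  hence "card (avoiding T') \<le> card (avoiding T \<union> (\<Union>w\<in>T \<inter> dependent v. A w \<inter> avoiding T'))"
    using fin finite_avoiding by (intro card_mono) auto
  also have "\<dots> \<le> card (avoiding T) + card (\<Union>w\<in>T \<inter> dependent v. A w \<inter> avoiding T')"
    by (rule card_Un_le)
  also have "\<dots> \<le> card (avoiding T) + (\<Sum>w\<in>T \<inter> dependent v. card (A w \<inter> avoiding T'))"
    using card_UN_le[OF fin] by (rule add_left_mono)
  finally have "real (card (avoiding T'))
      \<le> card (avoiding T) + (\<Sum>w\<in>T \<inter> dependent v. real (card (A w \<inter> avoiding T')))"
    by (simp flip: of_nat_sum of_nat_add)
  also have "(\<Sum>w\<in>T \<inter> dependent v. real (card (A w \<inter> avoiding T')))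
      \<le> card (T \<inter> dependent v) * (2 * p * card (avoiding T'))"
    using sum_mono[of "T \<inter> dependent v", OF IH] unfolding T'_def by simp
  also have "\<dots> \<le> D * (2 * p * card (avoiding T'))"
  proof -
    have "card (T \<inter> dependent v) \<le> card (dependent v)"
      using finite_V unfolding dependent_def by (intro card_mono) auto
    also have "\<dots> \<le> D"
      using card_dependent[OF v] unfolding dependent_def .
    finally show ?thesis
      using p_nonneg by (intro mult_right_mono) auto
  qed
  also have "\<dots> \<le> card (avoiding T') / 2"
    using mult_right_mono[OF p_D, of "card (avoiding T')"] by (simp add: algebra_simps)
  finally show ?thesis
    unfolding T'_def by simp
qed

text \<open>Conditioning on avoiding the events independent of \<open>A v\<close> does not change its probability,
  and by the previous lemma avoiding also the dependent ones costs at most a factor 2.\<close>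
lemma card_A_Int_avoiding_step:
  assumes v: "v \<in> V" and T: "T \<subseteq> V"
    and IH: "\<And>w. w \<in> T \<inter> dependent v \<Longrightarrow>
      real (card (A w \<inter> avoiding (T - dependent v))) \<le> 2 * p * card (avoiding (T - dependent v))"
  shows "real (card (A v \<inter> avoiding T)) \<le> 2 * p * card (avoiding T)"
proof -
  have "card (A v \<inter> avoiding T) \<le> card (A v \<inter> avoiding (T - dependent v))"
    using finite_avoiding unfolding avoiding_def by (intro card_mono) auto
  also have "real (card (A v \<inter> avoiding (T - dependent v))) \<le> p * card (avoiding (T - dependent v))"
    using v T unfolding dependent_def by (intro card_A_Int_avoiding_independent) auto
  also have "\<dots> \<le> p * (2 * card (avoiding T))"
    using card_avoiding_Diff_dependent_le[OF v T IH] p_nonneg by (intro mult_left_mono)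
  finally show ?thesis
    by simp
qed

lemma avoiding_invariant:
  assumes "T \<subseteq> V"
  shows "card (avoiding T) > 0 \<and> (\<forall>v\<in>V. real (card (A v \<inter> avoiding T)) \<le> 2 * p * card (avoiding T))"
  using finite_subset[OF assms finite_V] assms
proof (induction T rule: finite_psubset_induct)
  case (psubset T)
  have IH: "card (avoiding T') > 0"
    "\<And>v. v \<in> V \<Longrightarrow> real (card (A v \<inter> avoiding T')) \<le> 2 * p * card (avoiding T')"
    if "T' \<subset> T" for T'
    using psubset.IH[OF that] that psubset.prems by auto
  have pos: "card (avoiding T) > 0"
  proof (cases "T = {}")
    case True
    thus ?thesis
      using finite_I by (auto simp: avoiding_def card_gt_0_iff)
  next
    case False
    then obtain w where w: "w \<in> T"
      by blast
    hence "T - {w} \<subset> T" "w \<in> V"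
      using psubset.prems by auto
    hence "card (avoiding (insert w (T - {w}))) > 0"
      using IH by (intro card_avoiding_pos_step)
    moreover have "insert w (T - {w}) = T"
      using w by blast
    ultimately show ?thesis
      by simp
  qed
  moreover have "real (card (A v \<inter> avoiding T)) \<le> 2 * p * card (avoiding T)" if v: "v \<in> V" for v
  proof (rule card_A_Int_avoiding_step[OF v psubset.prems])
    fix w assume w: "w \<in> T \<inter> dependent v"
    hence "T - dependent v \<subset> T" "w \<in> V"
      unfolding dependent_def by auto
    thus "real (card (A w \<inter> avoiding (T - dependent v))) \<le> 2 * p * card (avoiding (T - dependent v))"
      by (rule IH(2))
  qed
  ultimately show ?case
    by blast
qed

theorem avoiding_all_nonempty: "Pow I - \<Union>(A ` V) \<noteq> {}"
proof -
  have "card (avoiding V) > 0"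
    using avoiding_invariant[of V] by blast
  thus ?thesis
    unfolding avoiding_def by (simp add: card_gt_0_iff)
qed

end

text \<open>The vertices \<open>2 * i - 1\<close> and \<open>2 * i\<close> form the \<open>i\<close>-th pair. A set \<open>\<sigma>\<close> of pair indices
  selects the odd vertex of the pairs in \<open>\<sigma>\<close> and the even vertex of the others; \<open>pair_sign u\<close>
  is \<open>1\<close> on selected vertices and \<open>-1\<close> on the others.\<close>
definition pair_index :: "nat \<Rightarrow> nat" where
  "pair_index u = (u + 1) div 2"

definition pair_split :: "nat \<Rightarrow> nat set \<Rightarrow> nat set" where
  "pair_split n \<sigma> = {u\<in>{1..n}. odd u \<longleftrightarrow> pair_index u \<in> \<sigma>}"

definition pair_sign :: "nat \<Rightarrow> bool \<Rightarrow> real" where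
  "pair_sign u b = (if odd u \<longleftrightarrow> b then 1 else -1)"

lemma abs_pair_sign [simp]: "\<bar>pair_sign u b\<bar> = 1"
  unfolding pair_sign_def by simp

lemma pair_index_fiber_subset: "{u. pair_index u = i} \<subseteq> {2 * i - 1, 2 * i}"
  unfolding pair_index_def by auto

lemma card_pair_index_fiber_le: "card {u\<in>N. pair_index u = i} \<le> 2"
proof -
  have "card {u\<in>N. pair_index u = i} \<le> card {2 * i - 1, 2 * i}"
    using pair_index_fiber_subset by (intro card_mono) auto
  also have "\<dots> \<le> 2"
    by (simp add: card_insert_if)
  finally show ?thesis .
qed

lemma pair_index_mem: "u \<in> {1..2 * m} \<Longrightarrow> pair_index u \<in> {1..m}"
  unfolding pair_index_def by auto

lemma card_pair_split:
  assumes "\<sigma> \<subseteq> {1..m}"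
  shows "card (pair_split (2 * m) \<sigma>) = m"
proof -
  define f where "f i = (if i \<in> \<sigma> then 2 * i - 1 else 2 * i)" for i
  have "pair_split (2 * m) \<sigma> = f ` {1..m}"
  proof (intro equalityI subsetI)
    fix u assume u: "u \<in> pair_split (2 * m) \<sigma>"
    hence "pair_index u \<in> {1..m}" "u = f (pair_index u)"
      using pair_index_mem unfolding pair_split_def f_def pair_index_def by auto
    thus "u \<in> f ` {1..m}"
      by blast
  next
    fix u assume "u \<in> f ` {1..m}"
    then obtain i where "i \<in> {1..m}" "u = f i"
      by blast
    thus "u \<in> pair_split (2 * m) \<sigma>"
      unfolding pair_split_def f_def pair_index_def by auto
  qed
  moreover have "inj_on f {1..m}"
    unfolding f_def by (rule inj_onI) (auto split: if_splits)
  ultimately show ?thesis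
    by (simp add: card_image)
qed

lemma sum_pair_sign_eq:
  assumes "finite N" and "N \<subseteq> {1..n}"
  shows "(\<Sum>u\<in>N. pair_sign u (pair_index u \<in> \<sigma>)) = 2 * card (N \<inter> pair_split n \<sigma>) - real (card N)"
proof -
  have "(\<Sum>u\<in>N. pair_sign u (pair_index u \<in> \<sigma>)) = (\<Sum>u\<in>N. if u \<in> pair_split n \<sigma> then 1 else -1)"
    using assms(2) by (intro sum.cong) (auto simp: pair_sign_def pair_split_def)
  also have "\<dots> = real (card (N \<inter> pair_split n \<sigma>)) - card (N - pair_split n \<sigma>)"
    using assms(1) by (simp add: sum.If_cases Diff_eq)
  also have "card (N - pair_split n \<sigma>) = card N - card (N \<inter> pair_split n \<sigma>)"
    using assms(1) by (simp add: card_Diff_subset_Int Diff_Int2 card_Diff_subset)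
  finally show ?thesis
    using card_mono[OF assms(1), of "N \<inter> pair_split n \<sigma>"] by (simp add: of_nat_diff)
qed

text \<open>Grouping the summands by pairs makes the sum a sum of independent signed terms, each
  of absolute value at most the size of its pair.\<close>
lemma card_Pow_pair_imbalance_gt_le:
  fixes l t :: real
  assumes I: "finite I" and N: "finite N" "pair_index ` N \<subseteq> I" and l: "l > 0"
  shows "real (card {\<sigma>\<in>Pow I. t < \<bar>\<Sum>u\<in>N. pair_sign u (pair_index u \<in> \<sigma>)\<bar>})
           \<le> 2 * 2 ^ card I * exp (l\<^sup>2 * real (card N) - l * t)"
proof -
  define h where "h i b = (\<Sum>u\<in>{u\<in>N. pair_index u = i}. pair_sign u b)" for i b
  have group: "(\<Sum>i\<in>I. h i (i \<in> \<sigma>)) = (\<Sum>u\<in>N. pair_sign u (pair_index u \<in> \<sigma>))" for \<sigma>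
  proof -
    have "(\<Sum>i\<in>I. h i (i \<in> \<sigma>)) = (\<Sum>i\<in>I. \<Sum>u\<in>{u\<in>N. pair_index u = i}. pair_sign u (pair_index u \<in> \<sigma>))"
      unfolding h_def by (intro sum.cong) auto
    also have "\<dots> = (\<Sum>u\<in>N. pair_sign u (pair_index u \<in> \<sigma>))"
      using N by (intro sum.group I) auto
    finally show ?thesis .
  qed
  have anti: "h i False = - h i True" for i
    unfolding h_def pair_sign_def sum_negf[symmetric] by (rule sum.cong) auto
  have "(h i True)\<^sup>2 \<le> 2 * real (card {u\<in>N. pair_index u = i})" for i
  proof -
    have "\<bar>h i True\<bar> \<le> (\<Sum>u\<in>{u\<in>N. pair_index u = i}. \<bar>pair_sign u True\<bar>)"
      unfolding h_def by (rule sum_abs)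
    also have "\<dots> = card {u\<in>N. pair_index u = i}"
      by simp
    finally have "\<bar>h i True\<bar> \<le> card {u\<in>N. pair_index u = i}" .
    hence "\<bar>h i True\<bar> * \<bar>h i True\<bar> \<le> real (card {u\<in>N. pair_index u = i}) * 2"
      using card_pair_index_fiber_le[of N i] by (intro mult_mono) auto
    thus ?thesis
      by (simp add: power2_eq_square abs_mult_self_eq)
  qed
  hence "(\<Sum>i\<in>I. (h i True)\<^sup>2) \<le> 2 * real (\<Sum>i\<in>I. card {u\<in>N. pair_index u = i})"
    by (simp add: sum_distrib_left sum_mono)
  also have "(\<Sum>i\<in>I. card {u\<in>N. pair_index u = i}) = card N"
    using card_eq_sum[of N] sum.group[OF N(1) I N(2), of "\<lambda>_. 1::nat"] by simp
  finally have "(\<Sum>i\<in>I. (h i True)\<^sup>2) \<le> 2 * real (card N)" .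
  from card_Pow_abs_signed_sum_gt_le[OF I anti this l, of t] show ?thesis
    by (simp add: group)
qed

lemma nbhd_subset: "simple_graph_on V E \<Longrightarrow> nbhd E v \<subseteq> V"
  unfolding simple_graph_on_def nbhd_def by auto

lemma card_nbhd_le:
  assumes "regular_graph_on V E d"
  shows "card (nbhd E v) \<le> d"
proof (cases "v \<in> V")
  case False
  hence "nbhd E v = {}"
    using assms unfolding regular_graph_on_def simple_graph_on_def nbhd_def by auto
  thus ?thesis
    by simp
qed (use assms in \<open>simp add: regular_graph_on_def\<close>)

text \<open>Two vertices have dependent neighbourhood splits only if one is adjacent to the partner
  of a neighbour of the other.\<close>
lemma card_pair_dependent_le:
  assumes reg: "regular_graph_on V E d" and V: "finite V"
  shows "card {w\<in>V. pair_index ` nbhd E w \<inter> pair_index ` nbhd E v \<noteq> {}} \<le> 2 * d\<^sup>2"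
proof -
  define partners where "partners y = {2 * pair_index y - 1, 2 * pair_index y}" for y
  have sg: "simple_graph_on V E"
    using reg unfolding regular_graph_on_def by blast
  have fin: "finite (nbhd E u)" for u
    using finite_subset[OF nbhd_subset[OF sg] V] .
  have "{w\<in>V. pair_index ` nbhd E w \<inter> pair_index ` nbhd E v \<noteq> {}}
          \<subseteq> (\<Union>y\<in>nbhd E v. \<Union>z\<in>partners y. nbhd E z)"
  proof
    fix w assume "w \<in> {w\<in>V. pair_index ` nbhd E w \<inter> pair_index ` nbhd E v \<noteq> {}}"
    then obtain a y where a: "a \<in> nbhd E w" and y: "y \<in> nbhd E v" and eq: "pair_index a = pair_index y"
      by auto
    have "a \<in> partners y"
      using pair_index_fiber_subset eq unfolding partners_def by blast
    moreover have "w \<in> nbhd E a"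
      using a sg unfolding simple_graph_on_def nbhd_def by auto
    ultimately show "w \<in> (\<Union>y\<in>nbhd E v. \<Union>z\<in>partners y. nbhd E z)"
      using y by blast
  qed
  hence "card {w\<in>V. pair_index ` nbhd E w \<inter> pair_index ` nbhd E v \<noteq> {}}
           \<le> card (\<Union>y\<in>nbhd E v. \<Union>z\<in>partners y. nbhd E z)"
    using fin unfolding partners_def by (intro card_mono) auto
  also have "\<dots> \<le> (\<Sum>y\<in>nbhd E v. card (\<Union>z\<in>partners y. nbhd E z))"
    by (rule card_UN_le[OF fin])
  also have "\<dots> \<le> (\<Sum>y\<in>nbhd E v. 2 * d)"
  proof (rule sum_mono)
    fix y
    have "card (\<Union>z\<in>partners y. nbhd E z) \<le> (\<Sum>z\<in>partners y. card (nbhd E z))"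
      unfolding partners_def by (rule card_UN_le) simp
    also have "\<dots> \<le> (\<Sum>z\<in>partners y. d)"
      using card_nbhd_le[OF reg] by (rule sum_mono)
    also have "\<dots> \<le> 2 * d"
      unfolding partners_def by (simp add: card_insert_if)
    finally show "card (\<Union>z\<in>partners y. nbhd E z) \<le> 2 * d" .
  qed
  also have "\<dots> \<le> 2 * d\<^sup>2"
    using card_nbhd_le[OF reg, of v] by (simp add: power2_eq_square)
  finally show ?thesis .
qed

lemma sixteen_pow6_le_exp:
  fixes x :: real
  assumes "x \<ge> 14000000"
  shows "16 * x ^ 6 \<le> exp x"
proof -
  have "16 * x ^ 6 \<le> x ^ 6 * (x / 823543)"
    using mult_left_mono[of 16 "x / 823543" "x ^ 6"] assms by (simp add: mult.commute)
  also have "\<dots> = (x / 7) ^ 7"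
    by (simp add: power_divide eval_nat_numeral)
  also have "\<dots> \<le> (1 + x / real 7) ^ 7"
    using assms by (intro power_mono) auto
  also have "\<dots> \<le> exp x"
    using assms by (intro exp_ge_one_plus_x_over_n_power_n) auto
  finally show ?thesis .
qed

definition imbalance :: "(nat \<Rightarrow> nat \<Rightarrow> bool) \<Rightarrow> nat \<Rightarrow> nat set \<Rightarrow> real" where
  "imbalance E v \<sigma> = (\<Sum>u\<in>nbhd E v. pair_sign u (pair_index u \<in> \<sigma>))"

lemma imbalance_Int_pair_indices: "imbalance E v (\<sigma> \<inter> pair_index ` nbhd E v) = imbalance E v \<sigma>"
  unfolding imbalance_def by (intro sum.cong) auto

lemma imbalance_eq:
  assumes reg: "regular_graph_on {1..n} E d" and v: "v \<in> {1..n}"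
  shows "imbalance E v \<sigma> = 2 * card (nbhd E v \<inter> pair_split n \<sigma>) - real d"
proof -
  have "nbhd E v \<subseteq> {1..n}"
    using reg nbhd_subset unfolding regular_graph_on_def by blast
  moreover have "card (nbhd E v) = d"
    using reg v unfolding regular_graph_on_def by blast
  ultimately show ?thesis
    unfolding imbalance_def by (subst sum_pair_sign_eq) (auto intro: finite_subset)
qed

lemma card_imbalance_gt_le:
  fixes x :: real
  assumes reg: "regular_graph_on {1..2 * m} E d" and x: "x > 0" "x ^ 3 = real d"
  shows "real (card {\<sigma>\<in>Pow {1..m}. 2 * x\<^sup>2 < \<bar>imbalance E v \<sigma>\<bar>})
           \<le> 2 * exp (- x) * card (Pow {1..m})"
proof -
  have "nbhd E v \<subseteq> {1..2 * m}"
    using reg nbhd_subset unfolding regular_graph_on_def by blast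
  hence "finite (nbhd E v)" "pair_index ` nbhd E v \<subseteq> {1..m}"
    using pair_index_mem finite_subset by blast+
  hence "real (card {\<sigma>\<in>Pow {1..m}. 2 * x\<^sup>2 < \<bar>imbalance E v \<sigma>\<bar>})
      \<le> 2 * 2 ^ card {1..m} * exp ((1/x)\<^sup>2 * real (card (nbhd E v)) - (1/x) * (2 * x\<^sup>2))"
    unfolding imbalance_def using x by (intro card_Pow_pair_imbalance_gt_le) auto
  also have "(1/x)\<^sup>2 * real (card (nbhd E v)) \<le> (1/x)\<^sup>2 * real d"
    using card_nbhd_le[OF reg] by (intro mult_left_mono) auto
  also have "(1/x)\<^sup>2 * real d - (1/x) * (2 * x\<^sup>2) = - x"
    using x unfolding x(2)[symmetric] by (simp add: field_simps power2_eq_square eval_nat_numeral)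
  finally show ?thesis
    by (simp add: card_Pow mult_ac)
qed

lemma exists_balanced_pair_split:
  assumes d: "d \<ge> 14000000 ^ 3" and reg: "regular_graph_on {1..2 * m} E d"
  shows "\<exists>\<sigma>\<subseteq>{1..m}. \<forall>v\<in>{1..2 * m}. \<bar>imbalance E v \<sigma>\<bar> \<le> 2 * real d powr (2/3)"
proof -
  define x where "x = real d powr (1/3)"
  define p where "p = 2 * exp (- x)"
  define A where "A v = {\<sigma>\<in>Pow {1..m}. 2 * x\<^sup>2 < \<bar>imbalance E v \<sigma>\<bar>}" for v
  have "real d > 0"
    using d by simp
  hence x_pos: "x > 0" and x_cube: "x ^ 3 = real d" and x_square: "x\<^sup>2 = real d powr (2/3)"
    unfolding x_def by (simp_all add: powr_realpow[symmetric] powr_powr)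
  have "(14000000::real) = real (14000000 ^ 3) powr (1/3)"
    by (simp add: powr_realpow[symmetric] powr_powr)
  also have "\<dots> \<le> x"
    unfolding x_def using d by (intro powr_mono2) auto
  finally have "16 * x ^ 6 \<le> exp x"
    by (rule sixteen_pow6_le_exp)
  moreover have "real d ^ 2 = x ^ 6"
    unfolding x_cube[symmetric] by (simp add: power_mult[symmetric])
  ultimately have p_D: "4 * p * real (2 * d\<^sup>2) \<le> 1"
    unfolding p_def by (simp add: mult_ac exp_minus field_simps)
  have "2 \<le> real (2 * d\<^sup>2)"
    using d by simp
  hence "4 * p * 2 \<le> 4 * p * real (2 * d\<^sup>2)"
    unfolding p_def by (intro mult_left_mono) auto
  hence "p < 1/2"
    using p_D by linarith
  have "local_lemma {1..m} {1..2 * m} A (\<lambda>v. pair_index ` nbhd E v) p (2 * d\<^sup>2)"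
  proof
    show "\<sigma> \<in> A v \<longleftrightarrow> \<sigma> \<inter> pair_index ` nbhd E v \<in> A v" if "\<sigma> \<subseteq> {1..m}" for v \<sigma>
      using that by (auto simp: A_def imbalance_Int_pair_indices)
    show "real (card (A v)) \<le> p * real (card (Pow {1..m}))" for v
      unfolding A_def p_def by (rule card_imbalance_gt_le[OF reg x_pos x_cube])
    show "card {w\<in>{1..2 * m}. pair_index ` nbhd E w \<inter> pair_index ` nbhd E v \<noteq> {}} \<le> 2 * d\<^sup>2" for v
      using card_pair_dependent_le[OF reg] by simp
  qed (use p_D \<open>p < 1/2\<close> in \<open>auto simp: A_def p_def\<close>)
  from local_lemma.avoiding_all_nonempty[OF this]
  obtain \<sigma> where "\<sigma> \<subseteq> {1..m}" "\<And>v. v \<in> {1..2 * m} \<Longrightarrow> \<sigma> \<notin> A v"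
    by blast
  thus ?thesis
    unfolding A_def x_square[symmetric] by (auto simp: not_less)
qed

lemma nbhd_induced: "v \<in> U \<Longrightarrow> nbhd (induced E U) v = nbhd E v \<inter> U"
  unfolding nbhd_def induced_def by auto

lemma nbhd_bipartite_sub: "v \<in> X \<Longrightarrow> X \<inter> Y = {} \<Longrightarrow> nbhd (bipartite_sub E X Y) v = nbhd E v \<inter> Y"
  unfolding nbhd_def bipartite_sub_def by auto

lemma bipartite_sub_commute: "bipartite_sub E X Y = bipartite_sub E Y X"
  unfolding bipartite_sub_def by (intro ext) auto

lemma card_nbhd_Int_add_card_nbhd_Int:
  assumes reg: "regular_graph_on V E d" and "finite V" and v: "v \<in> V"
    and XY: "X \<union> Y = V" "X \<inter> Y = {}"
  shows "card (nbhd E v \<inter> X) + card (nbhd E v \<inter> Y) = d"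
proof -
  have sub: "nbhd E v \<subseteq> V"
    using reg nbhd_subset unfolding regular_graph_on_def by blast
  hence "card (nbhd E v) = card ((nbhd E v \<inter> X) \<union> (nbhd E v \<inter> Y))"
    using XY by (intro arg_cong[where f = card]) blast
  also have "\<dots> = card (nbhd E v \<inter> X) + card (nbhd E v \<inter> Y)"
    using XY sub \<open>finite V\<close> by (intro card_Un_disjoint) (auto intro: finite_subset)
  finally show ?thesis
    using reg v unfolding regular_graph_on_def by simp
qed

lemma degrees_of_balanced_bipartition:
  assumes reg: "regular_graph_on V E d" and "finite V" and XY: "X \<union> Y = V" "X \<inter> Y = {}"
    and balanced: "\<And>v. v \<in> V \<Longrightarrow> \<bar>2 * real (card (nbhd E v \<inter> X)) - d\<bar> \<le> 2 * t"
  shows "\<forall>(H, VH) \<in> {(bipartite_sub E X Y, X \<union> Y), (induced E X, X), (induced E Y, Y)}.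
           \<forall>v\<in>VH. real d / 2 - t \<le> real (degree H v) \<and> real (degree H v) \<le> real d / 2 + t"
proof -
  define near_half where "near_half k \<longleftrightarrow> real d / 2 - t \<le> real k \<and> real k \<le> real d / 2 + t" for k
  have near_half: "near_half (card (nbhd E v \<inter> X)) \<and> near_half (card (nbhd E v \<inter> Y))"
    if v: "v \<in> V" for v
  proof -
    have "real (card (nbhd E v \<inter> X)) + real (card (nbhd E v \<inter> Y)) = real d"
      using card_nbhd_Int_add_card_nbhd_Int[OF reg \<open>finite V\<close> v XY] by (simp flip: of_nat_add)
    thus ?thesis
      using balanced[OF v] unfolding near_half_def by (simp add: abs_le_iff)
  qed
  have "\<forall>v\<in>X \<union> Y. near_half (degree (bipartite_sub E X Y) v)"
  proof
    fix v assume v: "v \<in> X \<union> Y"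
    have "nbhd (bipartite_sub E X Y) v \<in> {nbhd E v \<inter> X, nbhd E v \<inter> Y}"
      using v XY(2) nbhd_bipartite_sub[of v X Y E] nbhd_bipartite_sub[of v Y X E]
      by (auto simp only: bipartite_sub_commute[of E Y X] Int_commute[of Y X])
    thus "near_half (degree (bipartite_sub E X Y) v)"
      using near_half[of v] v XY(1) unfolding Defs.degree_def by auto
  qed
  moreover have "\<forall>v\<in>U. near_half (degree (induced E U) v)" if U: "U = X \<or> U = Y" for U
  proof
    fix v assume v: "v \<in> U"
    hence "v \<in> V"
      using U XY(1) by blast
    thus "near_half (degree (induced E U) v)"
      using near_half U unfolding Defs.degree_def nbhd_induced[OF v] by blast
  qed
  ultimately show ?thesis
    unfolding near_half_def by simp
qed

theorem lemma3p1:
  shows "\<exists>d0::nat. d0 > 0 \<and> (\<forall>d n E. d \<ge> d0 \<longrightarrow> n \<ge> d + 1 \<longrightarrow> even n \<longrightarrow>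
     regular_graph_on {1..n} E d \<longrightarrow>
     (\<exists>X Y. X \<union> Y = {1..n} \<and> X \<inter> Y = {} \<and> card X = n div 2 \<and> card Y = n div 2 \<and>
        (\<forall>(H, VH) \<in> {(bipartite_sub E X Y, X \<union> Y), (induced E X, X), (induced E Y, Y)}.
           \<forall>v\<in>VH. real d / 2 - real d powr (2/3) \<le> real (degree H v) \<and>
                   real (degree H v) \<le> real d / 2 + real d powr (2/3))))"
proof (intro exI[of _ "14000000 ^ 3"] conjI allI impI)
  fix d n :: nat and E
  assume d: "14000000 ^ 3 \<le> d" and "n \<ge> d + 1" and "even n" and reg: "regular_graph_on {1..n} E d"
  from \<open>even n\<close> obtain m where n: "n = 2 * m"
    by (rule evenE)
  obtain \<sigma> where \<sigma>: "\<sigma> \<subseteq> {1..m}" and balanced: "\<And>v. v \<in> {1..n} \<Longrightarrow>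
      \<bar>2 * real (card (nbhd E v \<inter> pair_split n \<sigma>)) - d\<bar> \<le> 2 * real d powr (2/3)"
    using exists_balanced_pair_split[OF d reg[unfolded n]] imbalance_eq[OF reg] unfolding n by auto
  define Y where "Y = {1..n} - pair_split n \<sigma>"
  have XY: "pair_split n \<sigma> \<union> Y = {1..n}" "pair_split n \<sigma> \<inter> Y = {}"
    unfolding Y_def pair_split_def by auto
  moreover have "card (pair_split n \<sigma>) = n div 2"
    unfolding n using card_pair_split[OF \<sigma>] by simp
  moreover have "card Y = n div 2"
    using calculation unfolding Y_def n by (subst card_Diff_subset) (auto intro: finite_subset)
  ultimately show "\<exists>X Y. X \<union> Y = {1..n} \<and> X \<inter> Y = {} \<and> card X = n div 2 \<and> card Y = n div 2 \<and>
        (\<forall>(H, VH) \<in> {(bipartite_sub E X Y, X \<union> Y), (induced E X, X), (induced E Y, Y)}.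
           \<forall>v\<in>VH. real d / 2 - real d powr (2/3) \<le> real (degree H v) \<and>
                   real (degree H v) \<le> real d / 2 + real d powr (2/3))"
    using degrees_of_balanced_bipartition[OF reg _ XY balanced] by blast
qed simp

end
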